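(* Let $A$ be a sub-tree of $T$ and $I\subseteq\mathcal{I}_A$. On $[0,d(r_A)]$, the function $f_A^I$ has at most $|V_A^I|$ corner points and at most $|V_A^I|+1$ maximal linear pieces. Moreover, the optimal sets associated with the successive linear pieces (from left to right) form a chain with respect to inclusion, each one containing the previous ones; equivalently, the matryoshka $\mathcal{M}_A^I$ is totally ordered by inclusion and has at most $|V_A^I|+1$ elements.
   Context: Setting. $T$ is a finite tree rooted at $r_T$, node set $V_T$; every edge $e$ has weight $w_e\ge 0$. Every node $v$ has a probability $\pi_v\in(0,1]$ and a prize $p_v\in\mathbb{R}$. $d(v)$ is the total weight of the path from $r_T$ to $v$. A random set $\omega\subseteq V_T$ contains each node $v$ independently with probability $\pi_v$. For $S\subseteq V_T$, $P(S)=1-\prod_{s\in S}(1-\pi_s)$ ($P(\emptyset)=0$). For a node $a$, the sub-tree $A$ rooted at $r_A=a$ consists of $a$ and all its descendants, with node set $V_A$; if $a$ has children $c_1,\dots,c_m$, then $A_i$ ($1\le i\le m$) is the sub-tree rooted at $c_i$, $A_0$ is the sub-tree consisting of the single node $r_A$, $\mathcal{I}_A=\{0,1,\dots,m\}$, and $V_A^I=\bigcup_{i\in I}V_{A_i}$ for $I\subseteq\mathcal{I}_A$. For $Q\subseteq V_T$, $W(Q)$ is the total weight of the edges lying on at least one path from $r_T$ to a node of $Q$. For $S\subseteq V_A$ and $x\le d(r_A)$ the expected profit is $G(S,x)=\sum_{s\in S}p_s\pi_s-\mathbb{E}[W(S\cap\omega)]+x\,P(S)$. Characteristic function. For a sub-tree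 $A$, $I\subseteq\mathcal{I}_A$ and $x\in[0,d(r_A)]$, $f_A^I(x)=\max_{S\subseteq V_A^I}G(S,x)$. A set $S\subseteq V_A^I$ with $G(S,x)=f_A^I(x)$ is an optimal set (for $f_A^I$) at $x$. The matryoshka $\mathcal{M}_A^I$ is the family of all $S\subseteq V_A^I$ such that for some $x\in[0,d(r_A)]$, $S$ is an optimal set at $x$ and no proper superset of $S$ contained in $V_A^I$ is optimal at $x$. *)

theory Defs
  imports "HOL-Analysis.Analysis"
begin

text \<open>The edge (par v, v) (for v \<noteq> r) carries the weight w v.\<close>

definition is_rooted_tree :: "'v set \<Rightarrow> 'v \<Rightarrow> ('v \<Rightarrow> 'v) \<Rightarrow> bool" where
  "is_rooted_tree V r par \<longleftrightarrow> finite V \<and> r \<in> V \<and> par r = r \<and>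
     (\<forall>v\<in>V. par v \<in> V) \<and> (\<forall>v\<in>V. \<exists>k. (par ^^ k) v = r)"

definition ancestors :: "('v \<Rightarrow> 'v) \<Rightarrow> 'v \<Rightarrow> 'v set" where
  "ancestors par v = {(par ^^ k) v | k. True}"

definition subtree :: "'v set \<Rightarrow> ('v \<Rightarrow> 'v) \<Rightarrow> 'v \<Rightarrow> 'v set" where
  "subtree V par a = {u \<in> V. a \<in> ancestors par u}"

definition children :: "'v set \<Rightarrow> 'v \<Rightarrow> ('v \<Rightarrow> 'v) \<Rightarrow> 'v \<Rightarrow> 'v set" where
  "children V r par a = {c \<in> V. c \<noteq> r \<and> par c = a}"

definition depth :: "'v \<Rightarrow> ('v \<Rightarrow> 'v) \<Rightarrow> ('v \<Rightarrow> real) \<Rightarrow> 'v \<Rightarrow> real" where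
  "depth r par w v = (\<Sum>u\<in>ancestors par v - {r}. w u)"

definition Wt :: "'v \<Rightarrow> ('v \<Rightarrow> 'v) \<Rightarrow> ('v \<Rightarrow> real) \<Rightarrow> 'v set \<Rightarrow> real" where
  "Wt r par w Q = (\<Sum>u\<in>(\<Union>q\<in>Q. ancestors par q) - {r}. w u)"

definition Pr :: "('v \<Rightarrow> real) \<Rightarrow> 'v set \<Rightarrow> real" where
  "Pr \<pi> S = 1 - (\<Prod>s\<in>S. 1 - \<pi> s)"

definition prob_omega :: "'v set \<Rightarrow> ('v \<Rightarrow> real) \<Rightarrow> 'v set \<Rightarrow> real" where
  "prob_omega V \<pi> om = (\<Prod>v\<in>om. \<pi> v) * (\<Prod>v\<in>V - om. 1 - \<pi> v)"

definition G :: "'v set \<Rightarrow> 'v \<Rightarrow> ('v \<Rightarrow> 'v) \<Rightarrow> ('v \<Rightarrow> real) \<Rightarrow> ('v \<Rightarrow> real) \<Rightarrow> ('v \<Rightarrow> real)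
    \<Rightarrow> 'v set \<Rightarrow> real \<Rightarrow> real" where
  "G V r par w \<pi> p S x =
     (\<Sum>s\<in>S. p s * \<pi> s) - (\<Sum>om\<in>Pow V. prob_omega V \<pi> om * Wt r par w (S \<inter> om)) + x * Pr \<pi> S"

text \<open>V_A^I, where the index set I is encoded as a subset of {a} \<union> children a:
  the element a stands for index 0 (the single-node sub-tree A_0), a child c stands for
  the sub-tree rooted at c.\<close>
definition VAI :: "'v set \<Rightarrow> ('v \<Rightarrow> 'v) \<Rightarrow> 'v \<Rightarrow> 'v set \<Rightarrow> 'v set" where
  "VAI V par a I = (\<Union>i\<in>I. if i = a then {a} else subtree V par i)"

definition fAI :: "'v set \<Rightarrow> 'v \<Rightarrow> ('v \<Rightarrow> 'v) \<Rightarrow> ('v \<Rightarrow> real) \<Rightarrow> ('v \<Rightarrow> real) \<Rightarrow> ('v \<Rightarrow> real)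
    \<Rightarrow> 'v \<Rightarrow> 'v set \<Rightarrow> real \<Rightarrow> real" where
  "fAI V r par w \<pi> p a I x = Max ((\<lambda>S. G V r par w \<pi> p S x) ` Pow (VAI V par a I))"

definition optimal_set :: "'v set \<Rightarrow> 'v \<Rightarrow> ('v \<Rightarrow> 'v) \<Rightarrow> ('v \<Rightarrow> real) \<Rightarrow> ('v \<Rightarrow> real) \<Rightarrow> ('v \<Rightarrow> real)
    \<Rightarrow> 'v \<Rightarrow> 'v set \<Rightarrow> 'v set \<Rightarrow> real \<Rightarrow> bool" where
  "optimal_set V r par w \<pi> p a I S x \<longleftrightarrow>
     S \<subseteq> VAI V par a I \<and> G V r par w \<pi> p S x = fAI V r par w \<pi> p a I x"

definition matryoshka :: "'v set \<Rightarrow> 'v \<Rightarrow> ('v \<Rightarrow> 'v) \<Rightarrow> ('v \<Rightarrow> real) \<Rightarrow> ('v \<Rightarrow> real) \<Rightarrow> ('v \<Rightarrow> real)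
    \<Rightarrow> 'v \<Rightarrow> 'v set \<Rightarrow> 'v set set" where
  "matryoshka V r par w \<pi> p a I =
     {S. S \<subseteq> VAI V par a I \<and> (\<exists>x\<in>{0..depth r par w a}.
        optimal_set V r par w \<pi> p a I S x \<and>
        (\<forall>S'. S \<subset> S' \<and> S' \<subseteq> VAI V par a I \<longrightarrow> \<not> optimal_set V r par w \<pi> p a I S' x))}"

end

theory Submission
  imports Defs
begin

text \<open>For S \<subseteq> V_A^I every edge on the root path of a is paid as soon as S \<inter> \<omega> \<noteq> {}, so
  G(S,x) = \<Sum> p \<pi> - E[W'(S \<inter> \<omega>)] - (d(r_A) - x) P(S), where W' only counts the edges below a.
  W' is a coverage function and P is submodular, hence for x \<le> d(r_A) the objective G(-,x) is
  supermodular: optimal sets are closed under union and there is a greatest one, M(x).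
  As G(S,y) - G(S,x) = (y - x) P(S) with P monotone, M is monotone in x (Topkis), so the sets
  M(x) form a chain of at most |V_A^I| + 1 subsets of V_A^I, which is the matryoshka.
  Finally f_A^I is the upper envelope of the affine functions x \<mapsto> G(M(y),x), and it can only
  bend where M jumps.\<close>

section \<open>Upper envelopes of affine functions\<close>

lemma finite_set_strict_enumeration:
  fixes B :: "'a::linorder set"
  assumes "finite B" "B \<subseteq> {lo..hi}" "lo \<in> B" "hi \<in> B"
  obtains t where "t 0 = lo" "t (card B - 1) = hi" "strict_mono_on {..card B - 1} t"
    "t ` {..card B - 1} = B"
proof -
  define xs where "xs = sorted_list_of_set B"
  have len: "length xs = card B" and set_xs: "set xs = B" and strict: "sorted_wrt (<) xs"
    using assms(1) by (simp_all add: xs_def strict_sorted_list_of_set)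
  have pos: "card B > 0" using assms(1,3) card_gt_0_iff by blast
  have "strict_mono_on {..card B - 1} ((!) xs)"
    using sorted_wrt_nth_less[OF strict] len pos by (intro strict_mono_onI) auto
  moreover have range: "(!) xs ` {..card B - 1} = B"
  proof -
    have "{..card B - 1} = {0..<length xs}" using pos len by auto
    then show ?thesis using nth_image[of "length xs" xs] set_xs by simp
  qed
  moreover have "xs ! 0 = lo" "xs ! (card B - 1) = hi"
  proof -
    have in_range: "xs ! j \<in> {lo..hi}" if "j \<le> card B - 1" for j
      using range that assms(2) by blast
    have "lo \<in> (!) xs ` {..card B - 1}" "hi \<in> (!) xs ` {..card B - 1}"
      using range assms(3,4) by simp_all
    then obtain j0 j1 where "j0 \<le> card B - 1" "xs ! j0 = lo" "j1 \<le> card B - 1" "xs ! j1 = hi"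
      by blast
    then have "xs ! 0 \<le> lo" "hi \<le> xs ! (card B - 1)"
      using strict_mono_on_less_eq[OF \<open>strict_mono_on {..card B - 1} ((!) xs)\<close>] by auto
    then show "xs ! 0 = lo" "xs ! (card B - 1) = hi"
      using in_range[of 0] in_range[of "card B - 1"] by auto
  qed
  ultimately show ?thesis using that by blast
qed

lemma ex_consecutive_interval:
  fixes t :: "nat \<Rightarrow> 'a::linorder"
  assumes "t 0 \<le> x" "x < t k"
  shows "\<exists>i<k. t i \<le> x \<and> x < t (Suc i)"
  using assms(2)
proof (induction k)
  case 0
  then show ?case using assms(1) by simp
next
  case (Suc k)
  show ?case
  proof (cases "x < t k")
    case True
    then show ?thesis using Suc.IH less_SucI by blast
  next
    case False
    then show ?thesis using Suc.prems by auto
  qed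
qed

lemma strict_mono_on_Suc_le:
  fixes t :: "nat \<Rightarrow> 'a::linorder"
  assumes "strict_mono_on {..k} t" "i < k" "j \<le> k" "t i < t j"
  shows "t (Suc i) \<le> t j"
  using assms strict_mono_on_less[OF assms(1)] strict_mono_on_less_eq[OF assms(1)] by simp

lemma piecewise_affine_differentiable:
  fixes f :: "real \<Rightarrow> real" and t :: "nat \<Rightarrow> real"
  assumes affine: "\<And>i. i < k \<Longrightarrow> \<exists>\<alpha> \<beta>. \<forall>z\<in>{t i..t (Suc i)}. f z = \<alpha> + \<beta> * z"
    and "t 0 \<le> x" "x < t k" "x \<notin> t ` {..<k}"
  shows "f differentiable (at x)"
proof -
  obtain i where i: "i < k" "t i \<le> x" "x < t (Suc i)"
    using ex_consecutive_interval[of t x k] assms(2,3) by blast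
  then have "t i < x" using assms(4) by (auto simp: order.order_iff_strict)
  obtain \<alpha> \<beta> where ab: "\<forall>z\<in>{t i..t (Suc i)}. f z = \<alpha> + \<beta> * z"
    using affine[OF i(1)] by blast
  have "((\<lambda>z. \<alpha> + \<beta> * z) has_derivative (\<lambda>h. \<beta> * h)) (at x)"
    by (auto intro!: derivative_eq_intros)
  then have "(f has_derivative (\<lambda>h. \<beta> * h)) (at x)"
    by (rule has_derivative_transform_within_open[where s = "{t i<..<t (Suc i)}"])
      (use \<open>t i < x\<close> i ab in auto)
  then show ?thesis by (auto simp: differentiable_def)
qed

lemma affine_envelope_on_interval:
  fixes f :: "real \<Rightarrow> real" and c P :: "'a \<Rightarrow> real"
  assumes "s < t"
    and const: "\<And>x. x \<in> {s<..<t} \<Longrightarrow> M x = S"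
    and attained: "\<And>x. x \<in> {s..t} \<Longrightarrow> f x = c (M x) + P (M x) * x"
    and dominates: "\<And>x T. x \<in> {s..t} \<Longrightarrow> T \<in> M ` {s..t} \<Longrightarrow> c T + P T * x \<le> f x"
  shows "\<forall>x\<in>{s..t}. f x = c S + P S * x"
proof
  fix x assume x: "x \<in> {s..t}"
  have "S \<in> M ` {s..t}"
    using const[of "(s + t) / 2"] \<open>s < t\<close> by (auto intro!: image_eqI[of _ M "(s + t) / 2"])
  then have "c S + P S * x \<le> f x" using dominates x by blast
  moreover have "0 \<le> c S + P S * x - (c (M x) + P (M x) * x)"
  proof (rule continuous_ge_on_closure[where S = "{s<..<t}" and x = x
      and f = "\<lambda>z. c S + P S * z - (c (M x) + P (M x) * z)"])
    show "continuous_on (closure {s<..<t}) (\<lambda>z. c S + P S * z - (c (M x) + P (M x) * z))"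
      by (intro continuous_intros)
    show "x \<in> closure {s<..<t}" using x \<open>s < t\<close> by simp
  next
    fix z assume z: "z \<in> {s<..<t}"
    then have "c (M x) + P (M x) * z \<le> f z" using dominates x by auto
    then show "0 \<le> c S + P S * z - (c (M x) + P (M x) * z)"
      using attained[of z] const[OF z] z by auto
  qed
  ultimately show "f x = c S + P S * x" using attained[OF x] by linarith
qed

lemma monotone_selection_breakpoints:
  fixes M :: "real \<Rightarrow> 'a::order"
  assumes "0 \<le> D" and mono: "mono_on {0..D} M" and fin: "finite (M ` {0..D})"
  obtains k t where "k \<le> card (M ` {0..D})" "t 0 = 0" "t k = D" "strict_mono_on {..k} t"
    "\<And>i x y. i < k \<Longrightarrow> x \<in> {t i<..<t (Suc i)} \<Longrightarrow> y \<in> {t i<..<t (Suc i)} \<Longrightarrow> M x = M y"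
proof -
  \<comment> \<open>Breakpoints: D and the left end of every level set of M, which is an interval by monotonicity.\<close>
  define L where "L S = Inf {x \<in> {0..D}. M x = S}" for S
  define B where "B = insert D (L ` M ` {0..D})"
  have L_bounds: "0 \<le> L (M y) \<and> L (M y) \<le> y" if "y \<in> {0..D}" for y
  proof -
    have ne: "{x \<in> {0..D}. M x = M y} \<noteq> {}" using that by auto
    have bdd: "bdd_below {x \<in> {0..D}. M x = M y}" by (rule bdd_belowI[of _ 0]) auto
    have "0 \<le> L (M y)" unfolding L_def by (rule cInf_greatest[OF ne]) auto
    moreover have "L (M y) \<le> y" unfolding L_def by (rule cInf_lower[OF _ bdd]) (use that in auto)
    ultimately show ?thesis ..
  qed
  have L_le: "x \<le> L (M y)" if "0 \<le> x" "x < y" "y \<le> D" "M x \<noteq> M y" for x y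
    unfolding L_def
  proof (rule cInf_greatest)
    show "{z \<in> {0..D}. M z = M y} \<noteq> {}" using that by auto
  next
    fix z assume z: "z \<in> {z \<in> {0..D}. M z = M y}"
    show "x \<le> z"
    proof (rule ccontr)
      assume "\<not> x \<le> z"
      then have "M z \<le> M x" "M x \<le> M y"
        using mono_onD[OF mono, of z x] mono_onD[OF mono, of x y] z that by auto
      then show False using z that by auto
    qed
  qed
  have "finite B" "B \<subseteq> {0..D}" "0 \<in> B" "D \<in> B"
    using fin L_bounds[of 0] L_bounds \<open>0 \<le> D\<close> by (force simp: B_def)+
  then obtain t where t: "t 0 = 0" "t (card B - 1) = D" "strict_mono_on {..card B - 1} t"
    and range: "t ` {..card B - 1} = B"
    by (rule finite_set_strict_enumeration)
  show ?thesis
  proof (rule that[OF _ t(1-3)])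
    have "card B \<le> Suc (card (L ` M ` {0..D}))"
      unfolding B_def using fin by (simp add: card_insert_if)
    also have "\<dots> \<le> Suc (card (M ` {0..D}))" using card_image_le[OF fin] by simp
    finally show "card B - 1 \<le> card (M ` {0..D})" by simp
  next
    fix i x y assume i: "i < card B - 1" and x: "x \<in> {t i<..<t (Suc i)}" and y: "y \<in> {t i<..<t (Suc i)}"
    have in_B: "t j \<in> {0..D}" if "j \<le> card B - 1" for j
      using range that \<open>B \<subseteq> {0..D}\<close> by blast
    have no_breakpoint: "\<not> (u \<le> L (M v) \<and> L (M v) \<le> v)" if "u \<in> {t i<..<t (Suc i)}" "v \<in> {t i<..<t (Suc i)}" for u v
    proof
      assume between: "u \<le> L (M v) \<and> L (M v) \<le> v"
      have "v \<in> {0..D}" using that in_B[of i] in_B[of "Suc i"] i by auto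
      then have "L (M v) \<in> B" unfolding B_def by blast
      then have "L (M v) \<in> t ` {..card B - 1}" using range by simp
      then obtain j where j: "j \<le> card B - 1" "L (M v) = t j" by (auto simp: image_iff)
      moreover have "t i < t j" using between that j by auto
      ultimately have "t (Suc i) \<le> L (M v)"
        using strict_mono_on_Suc_le[OF t(3) i, of j] by simp
      then show False using between that by auto
    qed
    have ordered: "M u = M v" if u: "u \<in> {t i<..<t (Suc i)}" and v: "v \<in> {t i<..<t (Suc i)}" and "u < v" for u v
    proof (rule ccontr)
      assume "M u \<noteq> M v"
      moreover have "0 \<le> u" "v \<le> D" using u v in_B[of i] in_B[of "Suc i"] i by auto
      ultimately have "u \<le> L (M v) \<and> L (M v) \<le> v"
        using L_le[of u v] L_bounds[of v] \<open>u < v\<close> by auto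
      then show False using no_breakpoint[OF u v] by blast
    qed
    show "M x = M y"
    proof (cases x y rule: linorder_cases)
      case less
      then show ?thesis by (rule ordered[OF x y])
    next
      case greater
      then show ?thesis by (rule ordered[OF y x, symmetric])
    qed simp
  qed
qed

lemma upper_envelope_of_monotone_selection:
  fixes f :: "real \<Rightarrow> real" and M :: "real \<Rightarrow> 'a::order" and c P :: "'a \<Rightarrow> real"
  assumes "0 \<le> D" "mono_on {0..D} M" "finite (M ` {0..D})" "card (M ` {0..D}) \<le> n + 1"
    and attained: "\<And>x. x \<in> {0..D} \<Longrightarrow> f x = c (M x) + P (M x) * x"
    and dominates: "\<And>x S. x \<in> {0..D} \<Longrightarrow> S \<in> M ` {0..D} \<Longrightarrow> c S + P S * x \<le> f x"
  shows "(finite {x \<in> {0<..<D}. \<not> f differentiable (at x)}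
         \<and> card {x \<in> {0<..<D}. \<not> f differentiable (at x)} \<le> n)
     \<and> (\<exists>k t. k \<le> n + 1 \<and> t 0 = 0 \<and> t k = D \<and> (\<forall>i<k. t i < t (Suc i)) \<and>
           (\<forall>i<k. \<exists>\<alpha> \<beta>. \<forall>x\<in>{t i..t (Suc i)}. f x = \<alpha> + \<beta> * x))"
proof -
  obtain k t where k: "k \<le> card (M ` {0..D})" and t: "t 0 = 0" "t k = D" "strict_mono_on {..k} t"
    and const: "\<And>i x y. i < k \<Longrightarrow> x \<in> {t i<..<t (Suc i)} \<Longrightarrow> y \<in> {t i<..<t (Suc i)} \<Longrightarrow> M x = M y"
    using monotone_selection_breakpoints assms(1-3) by blast
  have step: "t i < t (Suc i)" if "i < k" for i
    using strict_mono_onD[OF t(3)] that by simp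
  have affine: "\<exists>\<alpha> \<beta>. \<forall>x\<in>{t i..t (Suc i)}. f x = \<alpha> + \<beta> * x" if i: "i < k" for i
  proof -
    define m where "m = (t i + t (Suc i)) / 2"
    have m: "m \<in> {t i<..<t (Suc i)}" using step[OF i] by (simp add: m_def)
    have sub: "{t i..t (Suc i)} \<subseteq> {0..D}"
      using strict_mono_on_less_eq[OF t(3), of 0 i] strict_mono_on_less_eq[OF t(3), of "Suc i" k] i t(1,2)
      by auto
    have "\<forall>x\<in>{t i..t (Suc i)}. f x = c (M m) + P (M m) * x"
    proof (rule affine_envelope_on_interval[OF step[OF i], where M = M and S = "M m" and c = c and P = P])
      show "M x = M m" if "x \<in> {t i<..<t (Suc i)}" for x using const[OF i that m] .
      show "f x = c (M x) + P (M x) * x" if "x \<in> {t i..t (Suc i)}" for x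
        using attained sub that by blast
      show "c S + P S * x \<le> f x" if "x \<in> {t i..t (Suc i)}" "S \<in> M ` {t i..t (Suc i)}" for x S
        using dominates sub that image_mono by blast
    qed
    then show ?thesis by blast
  qed
  have corners: "{x \<in> {0<..<D}. \<not> f differentiable (at x)} \<subseteq> t ` {1..<k}"
  proof
    fix x assume x: "x \<in> {x \<in> {0<..<D}. \<not> f differentiable (at x)}"
    show "x \<in> t ` {1..<k}"
    proof (rule ccontr)
      assume not_corner: "x \<notin> t ` {1..<k}"
      have "x \<noteq> t j" if "j < k" for j
        using not_corner that x t(1) by (cases "j = 0") auto
      then have "x \<notin> t ` {..<k}" by auto
      then show False using piecewise_affine_differentiable[where f = f and t = t and k = k and x = x] affine x t by auto
    qed
  qed
  have "card (t ` {1..<k}) \<le> n" using card_image_le[of "{1..<k}" t] k assms(4) by simp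
  then have "finite {x \<in> {0<..<D}. \<not> f differentiable (at x)}
         \<and> card {x \<in> {0<..<D}. \<not> f differentiable (at x)} \<le> n"
    using corners card_mono[OF _ corners] finite_subset[OF corners] by fastforce
  moreover have "k \<le> n + 1" using k assms(4) by simp
  ultimately show ?thesis using t(1,2) step affine by blast
qed

section \<open>Maximising supermodular set functions\<close>

definition supermodular_on :: "'a set \<Rightarrow> ('a set \<Rightarrow> real) \<Rightarrow> bool" where
  "supermodular_on X g \<longleftrightarrow> (\<forall>S T. S \<subseteq> X \<longrightarrow> T \<subseteq> X \<longrightarrow> g S + g T \<le> g (S \<union> T) + g (S \<inter> T))"

definition greatest_arg_max :: "'a set \<Rightarrow> ('a set \<Rightarrow> real) \<Rightarrow> 'a set" where
  "greatest_arg_max X g = \<Union>{S. is_arg_max g (\<lambda>S. S \<subseteq> X) S}"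

lemma ex_is_arg_max_Pow:
  fixes g :: "'a set \<Rightarrow> real"
  assumes "finite X"
  shows "\<exists>S. is_arg_max g (\<lambda>S. S \<subseteq> X) S"
proof -
  have "Max (g ` Pow X) \<in> g ` Pow X" using assms by (intro Max_in) auto
  then obtain S where "S \<subseteq> X" "g S = Max (g ` Pow X)" by auto
  then have "is_arg_max g (\<lambda>S. S \<subseteq> X) S" using assms by (auto simp: is_arg_max_linorder)
  then show ?thesis ..
qed

lemma is_arg_max_PowD:
  assumes "is_arg_max g (\<lambda>S. S \<subseteq> X) S" "T \<subseteq> X"
  shows "g T \<le> (g S :: real)"
  using assms by (simp add: is_arg_max_linorder)

lemma is_arg_max_Un:
  assumes "supermodular_on X g" "is_arg_max g (\<lambda>S. S \<subseteq> X) S" "is_arg_max g (\<lambda>S. S \<subseteq> X) T"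
  shows "is_arg_max g (\<lambda>S. S \<subseteq> X) (S \<union> T)"
proof -
  have "S \<subseteq> X" "T \<subseteq> X" "\<forall>U\<subseteq>X. g U \<le> g T"
    using assms(2,3) by (auto simp: is_arg_max_linorder)
  moreover have "g (S \<inter> T) \<le> g S"
    using is_arg_max_PowD[OF assms(2)] \<open>S \<subseteq> X\<close> by blast
  moreover have "g S + g T \<le> g (S \<union> T) + g (S \<inter> T)"
    using assms(1) calculation(1,2) by (simp add: supermodular_on_def)
  ultimately show ?thesis by (auto simp: is_arg_max_linorder)
qed

lemma is_arg_max_greatest_arg_max:
  assumes "finite X" "supermodular_on X g"
  shows "is_arg_max g (\<lambda>S. S \<subseteq> X) (greatest_arg_max X g)"
proof -
  define A where "A = {S. is_arg_max g (\<lambda>S. S \<subseteq> X) S}"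
  have "A \<subseteq> Pow X" by (auto simp: A_def is_arg_max_def)
  then have "finite A" using assms(1) by (simp add: finite_subset)
  moreover have "A \<noteq> {}" using ex_is_arg_max_Pow[OF assms(1)] by (auto simp: A_def)
  ultimately obtain m where m: "m \<in> A" and maximal: "\<forall>S\<in>A. m \<subseteq> S \<longrightarrow> m = S"
    by (meson finite_has_maximal)
  have "S \<subseteq> m" if "S \<in> A" for S
  proof -
    have "m \<union> S \<in> A" using is_arg_max_Un[OF assms(2)] m that by (simp add: A_def)
    then show ?thesis using maximal by blast
  qed
  then have "greatest_arg_max X g = m" using m by (auto simp: greatest_arg_max_def A_def)
  then show ?thesis using m by (simp add: A_def)
qed

lemma greatest_arg_max_subset: "greatest_arg_max X g \<subseteq> X"
  unfolding greatest_arg_max_def is_arg_max_def by blast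

lemma arg_max_subset_greatest_arg_max:
  "is_arg_max g (\<lambda>S. S \<subseteq> X) S \<Longrightarrow> S \<subseteq> greatest_arg_max X g"
  unfolding greatest_arg_max_def by blast

lemma maximal_arg_max_iff_greatest:
  assumes "finite X" "supermodular_on X g"
  shows "is_arg_max g (\<lambda>S. S \<subseteq> X) S \<and> (\<forall>S'. S \<subset> S' \<and> S' \<subseteq> X \<longrightarrow> \<not> is_arg_max g (\<lambda>S. S \<subseteq> X) S')
    \<longleftrightarrow> S = greatest_arg_max X g" (is "?maximal \<longleftrightarrow> _")
proof
  have greatest: "is_arg_max g (\<lambda>S. S \<subseteq> X) (greatest_arg_max X g)"
    by (rule is_arg_max_greatest_arg_max[OF assms])
  then have "greatest_arg_max X g \<subseteq> X" by (simp add: is_arg_max_def)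
  show "S = greatest_arg_max X g" if ?maximal
    using that greatest \<open>greatest_arg_max X g \<subseteq> X\<close> arg_max_subset_greatest_arg_max[of g X S]
    by blast
  show ?maximal if "S = greatest_arg_max X g"
    using that greatest arg_max_subset_greatest_arg_max[of g X] by blast
qed

lemma greatest_arg_max_mono:
  assumes "finite X" "supermodular_on X g" "supermodular_on X h"
    and increasing_differences: "\<And>S T. S \<subseteq> T \<Longrightarrow> T \<subseteq> X \<Longrightarrow> h S - g S \<le> h T - g T"
  shows "greatest_arg_max X g \<subseteq> greatest_arg_max X h"
proof -
  define S where "S = greatest_arg_max X g"
  define T where "T = greatest_arg_max X h"
  have S: "is_arg_max g (\<lambda>S. S \<subseteq> X) S" and T: "is_arg_max h (\<lambda>S. S \<subseteq> X) T"
    unfolding S_def T_def using is_arg_max_greatest_arg_max assms(1-3) by blast+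
  then have "S \<subseteq> X" "T \<subseteq> X" by (auto simp: is_arg_max_def)
  then have "g (S \<inter> T) \<le> g S" using is_arg_max_PowD[OF S] by blast
  then have "h (S \<inter> T) \<le> h S"
    using increasing_differences[of "S \<inter> T" S] \<open>S \<subseteq> X\<close> by auto
  moreover have "h S + h T \<le> h (S \<union> T) + h (S \<inter> T)"
    using assms(3) \<open>S \<subseteq> X\<close> \<open>T \<subseteq> X\<close> by (simp add: supermodular_on_def)
  ultimately have "is_arg_max h (\<lambda>S. S \<subseteq> X) (S \<union> T)"
    using T \<open>S \<subseteq> X\<close> by (auto simp: is_arg_max_linorder)
  then show ?thesis unfolding S_def T_def greatest_arg_max_def by blast
qed

lemma mono_on_image_chain:
  fixes f :: "'a::linorder \<Rightarrow> 'b::order"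
  assumes "mono_on A f" "u \<in> f ` A" "v \<in> f ` A"
  shows "u \<le> v \<or> v \<le> u"
proof -
  obtain x y where "x \<in> A" "y \<in> A" "u = f x" "v = f y" using assms(2,3) by blast
  then show ?thesis using mono_onD[OF assms(1), of x y] mono_onD[OF assms(1), of y x] by fastforce
qed

lemma chain_of_subsets_card_le:
  assumes "finite X" "\<And>S. S \<in> C \<Longrightarrow> S \<subseteq> X" "\<And>S T. S \<in> C \<Longrightarrow> T \<in> C \<Longrightarrow> S \<subseteq> T \<or> T \<subseteq> S"
  shows "finite C" "card C \<le> card X + 1"
proof -
  have "C \<subseteq> Pow X" using assms(2) by blast
  then show "finite C" using assms(1) by (simp add: finite_subset)
  have "inj_on card C"
  proof
    fix S T assume "S \<in> C" "T \<in> C" "card S = card T"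
    moreover have "finite S" "finite T"
      using assms(1,2) \<open>S \<in> C\<close> \<open>T \<in> C\<close> finite_subset by blast+
    ultimately show "S = T"
      using assms(3)[OF \<open>S \<in> C\<close> \<open>T \<in> C\<close>] card_subset_eq[of T S] card_subset_eq[of S T] by auto
  qed
  then have "card C = card (card ` C)" by (simp add: card_image)
  also have "\<dots> \<le> card {0..card X}"
  proof (rule card_mono)
    show "card ` C \<subseteq> {0..card X}"
    proof
      fix k assume "k \<in> card ` C"
      then obtain S where "S \<in> C" "k = card S" by blast
      then show "k \<in> {0..card X}" using card_mono[OF assms(1) assms(2)] by simp
    qed
  qed simp
  finally show "card C \<le> card X + 1" by simp
qed

section \<open>The random node set\<close>

definition expect_omega :: "'v set \<Rightarrow> ('v \<Rightarrow> real) \<Rightarrow> ('v set \<Rightarrow> real) \<Rightarrow> real" where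
  "expect_omega V \<pi> h = (\<Sum>om\<in>Pow V. prob_omega V \<pi> om * h om)"

lemma expect_omega_avoid:
  assumes "finite V" "S \<subseteq> V"
  shows "expect_omega V \<pi> (\<lambda>om. if om \<inter> S = {} then 1 else 0) = (\<Prod>s\<in>S. 1 - \<pi> s)"
proof -
  \<comment> \<open>Expand a product of binomials, the nodes of S contributing only through their absence.\<close>
  define g where "g v = (if v \<in> S then 0 else \<pi> v)" for v
  have "(\<Prod>s\<in>S. 1 - \<pi> s) = (\<Prod>v\<in>V. if v \<in> S then 1 - \<pi> v else 1)"
    using assms by (simp add: prod.If_cases Int_absorb1)
  also have "\<dots> = (\<Prod>v\<in>V. g v + (1 - \<pi> v))"
    by (rule prod.cong) (auto simp: g_def)
  also have "\<dots> = (\<Sum>om\<in>Pow V. (\<Prod>v\<in>om. g v) * (\<Prod>v\<in>V - om. 1 - \<pi> v))"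
    by (rule prod_add[OF assms(1)])
  also have "\<dots> = expect_omega V \<pi> (\<lambda>om. if om \<inter> S = {} then 1 else 0)"
    unfolding expect_omega_def
  proof (rule sum.cong[OF refl])
    fix om assume "om \<in> Pow V"
    then have "finite om" using assms(1) finite_subset by auto
    then have "(\<Prod>v\<in>om. g v) = (if om \<inter> S = {} then \<Prod>v\<in>om. \<pi> v else 0)"
      by (auto simp: g_def intro!: prod.cong prod_zero)
    then show "(\<Prod>v\<in>om. g v) * (\<Prod>v\<in>V - om. 1 - \<pi> v)
        = prob_omega V \<pi> om * (if om \<inter> S = {} then 1 else 0)"
      by (simp add: prob_omega_def)
  qed
  finally show ?thesis ..
qed

lemma expect_omega_one: "finite V \<Longrightarrow> expect_omega V \<pi> (\<lambda>om. 1) = 1"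
  using expect_omega_avoid[of V "{}" \<pi>] by simp

lemma expect_omega_add:
  "expect_omega V \<pi> (\<lambda>om. h om + k om) = expect_omega V \<pi> h + expect_omega V \<pi> k"
  by (simp add: expect_omega_def ring_distribs sum.distrib)

lemma prob_omega_nonneg:
  assumes "\<forall>v\<in>V. 0 \<le> \<pi> v \<and> \<pi> v \<le> 1" "om \<subseteq> V"
  shows "0 \<le> prob_omega V \<pi> om"
proof -
  have "\<forall>v\<in>om. 0 \<le> \<pi> v" "\<forall>v\<in>V - om. 0 \<le> 1 - \<pi> v" using assms by auto
  then show ?thesis unfolding prob_omega_def by (intro mult_nonneg_nonneg prod_nonneg) auto
qed

lemma expect_omega_mono:
  assumes "\<forall>v\<in>V. 0 \<le> \<pi> v \<and> \<pi> v \<le> 1" "\<And>om. om \<subseteq> V \<Longrightarrow> h om \<le> k om"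
  shows "expect_omega V \<pi> h \<le> expect_omega V \<pi> k"
proof -
  have "prob_omega V \<pi> om * h om \<le> prob_omega V \<pi> om * k om" if "om \<in> Pow V" for om
  proof (rule mult_left_mono)
    show "h om \<le> k om" using assms(2) that by blast
    show "0 \<le> prob_omega V \<pi> om" using prob_omega_nonneg[OF assms(1)] that by blast
  qed
  then show ?thesis unfolding expect_omega_def by (intro sum_mono)
qed

lemma Pr_mono:
  assumes "finite T" "S \<subseteq> T" "\<forall>v\<in>T. 0 \<le> \<pi> v \<and> \<pi> v \<le> 1"
  shows "Pr \<pi> S \<le> Pr \<pi> T"
proof -
  have "(\<Prod>s\<in>T. 1 - \<pi> s) = (\<Prod>s\<in>T - S. 1 - \<pi> s) * (\<Prod>s\<in>S. 1 - \<pi> s)"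
    by (rule prod.subset_diff[OF assms(2,1)])
  also have "\<dots> \<le> (\<Prod>s\<in>S. 1 - \<pi> s)"
  proof (rule mult_left_le_one_le)
    show "0 \<le> (\<Prod>s\<in>S. 1 - \<pi> s)" using assms(2,3) by (intro prod_nonneg) auto
    show "0 \<le> (\<Prod>s\<in>T - S. 1 - \<pi> s)" "(\<Prod>s\<in>T - S. 1 - \<pi> s) \<le> 1"
      using assms(3) by (auto intro!: prod_nonneg prod_le_1)
  qed
  finally show ?thesis unfolding Pr_def by simp
qed

lemma Pr_Un_Int_le:
  assumes "finite S" "finite T" "\<forall>v\<in>S \<union> T. 0 \<le> \<pi> v \<and> \<pi> v \<le> 1"
  shows "Pr \<pi> (S \<union> T) + Pr \<pi> (S \<inter> T) \<le> Pr \<pi> S + Pr \<pi> T"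
proof -
  define q where "q A = (\<Prod>s\<in>A. 1 - \<pi> s)" for A
  have split: "q (A \<union> B) = q A * q B" if "finite A" "finite B" "A \<inter> B = {}" for A B
    unfolding q_def using that by (rule prod.union_disjoint)
  have fin: "finite (S - T)" "finite (T - S)" "finite (S \<inter> T)" "finite ((S - T) \<union> (T - S))"
    using assms(1,2) by auto
  have "q ((S - T) \<union> (S \<inter> T)) = q (S - T) * q (S \<inter> T)"
    "q ((T - S) \<union> (S \<inter> T)) = q (T - S) * q (S \<inter> T)"
    "q (((S - T) \<union> (T - S)) \<union> (S \<inter> T)) = q ((S - T) \<union> (T - S)) * q (S \<inter> T)"
    "q ((S - T) \<union> (T - S)) = q (S - T) * q (T - S)"
    using fin by (auto intro!: split)
  moreover have "(S - T) \<union> (S \<inter> T) = S" "(T - S) \<union> (S \<inter> T) = T"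
    "((S - T) \<union> (T - S)) \<union> (S \<inter> T) = S \<union> T"
    by blast+
  ultimately have q_S: "q S = q (S - T) * q (S \<inter> T)" and q_T: "q T = q (T - S) * q (S \<inter> T)"
    and q_Un: "q (S \<union> T) = q (S - T) * q (T - S) * q (S \<inter> T)"
    by simp_all
  have "0 \<le> q (S - T)" "q (S - T) \<le> 1" "0 \<le> q (T - S)" "q (T - S) \<le> 1" "0 \<le> q (S \<inter> T)"
    unfolding q_def using assms(3) by (auto intro!: prod_nonneg prod_le_1)
  then have "0 \<le> q (S \<inter> T) * (1 - q (S - T)) * (1 - q (T - S))" by simp
  then show ?thesis unfolding Pr_def q_def[symmetric] q_S q_T q_Un by (simp add: algebra_simps)
qed

lemma sum_Un_Int_le:
  fixes w :: "'a \<Rightarrow> real"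
  assumes "finite X" "finite Y" "Z \<subseteq> X \<inter> Y" "\<forall>u\<in>X \<inter> Y. 0 \<le> w u"
  shows "sum w (X \<union> Y) + sum w Z \<le> sum w X + sum w Y"
proof -
  have "sum w Z \<le> sum w (X \<inter> Y)" using assms by (intro sum_mono2) auto
  then show ?thesis using sum.union_inter[OF assms(1,2), of w] by linarith
qed

lemma G_affine: "G V r par w \<pi> p S y = G V r par w \<pi> p S x + (y - x) * Pr \<pi> S"
  unfolding G_def by (simp add: algebra_simps)

section \<open>The characteristic function of a sub-tree\<close>

lemma self_in_ancestors: "v \<in> ancestors par v"
  unfolding ancestors_def by (auto intro: exI[of _ 0])

lemma par_in_ancestors: "par v \<in> ancestors par v"
  unfolding ancestors_def by (auto intro: exI[of _ 1])

lemma ancestors_trans: "u \<in> ancestors par v \<Longrightarrow> ancestors par u \<subseteq> ancestors par v"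
  unfolding ancestors_def by (auto simp flip: funpow_add[unfolded comp_def, THEN fun_cong])

lemma ancestors_subset:
  assumes "\<forall>v\<in>V. par v \<in> V" "v \<in> V"
  shows "ancestors par v \<subseteq> V"
proof -
  have "(par ^^ k) v \<in> V" for k by (induction k) (use assms in auto)
  then show ?thesis unfolding ancestors_def by auto
qed

locale subtree_problem =
  fixes V :: "'v set" and r :: 'v and par :: "'v \<Rightarrow> 'v"
    and w \<pi> p :: "'v \<Rightarrow> real" and a :: 'v and I :: "'v set"
  assumes tree: "is_rooted_tree V r par"
    and w_nonneg: "\<forall>v\<in>V. w v \<ge> 0"
    and pi_range: "\<forall>v\<in>V. 0 < \<pi> v \<and> \<pi> v \<le> 1"
    and a_in: "a \<in> V"
    and I_sub: "I \<subseteq> insert a (children V r par a)"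
begin

abbreviation "VA \<equiv> VAI V par a I"
abbreviation "D \<equiv> depth r par w a"
abbreviation "profit \<equiv> G V r par w \<pi> p"

text \<open>W(Q) minus the weight D of the path from the root to a, which is common to all nonempty Q in VA.\<close>

definition W_below :: "'v set \<Rightarrow> real" where
  "W_below Q = (\<Sum>u\<in>(\<Union>q\<in>Q. ancestors par q) - ancestors par a. w u)"

lemma finite_V: "finite V" and par_closed: "\<forall>v\<in>V. par v \<in> V"
  and reaches_root: "\<forall>v\<in>V. \<exists>k. (par ^^ k) v = r"
  using tree unfolding is_rooted_tree_def by auto

lemma pi_nonneg_le_1: "\<forall>v\<in>V. 0 \<le> \<pi> v \<and> \<pi> v \<le> 1"
  using pi_range by force

lemma VAI_descendant:
  assumes "q \<in> VA"
  shows "q \<in> V \<and> a \<in> ancestors par q"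
proof -
  obtain i where i: "i \<in> I" "q \<in> (if i = a then {a} else subtree V par i)"
    using assms unfolding VAI_def by auto
  show ?thesis
  proof (cases "i = a")
    case True
    then show ?thesis using i a_in self_in_ancestors by auto
  next
    case False
    then have "par i = a" using i I_sub by (auto simp: children_def)
    moreover have "q \<in> V" "i \<in> ancestors par q" using i False by (auto simp: subtree_def)
    ultimately show ?thesis using par_in_ancestors[of par i] ancestors_trans[of i par q] by auto
  qed
qed

lemma VAI_subset: "VA \<subseteq> V"
  using VAI_descendant by blast

lemma finite_VAI: "finite VA"
  using finite_subset[OF VAI_subset finite_V] .

lemma depth_nonneg: "0 \<le> D"
  unfolding depth_def using ancestors_subset[OF par_closed a_in] w_nonneg by (auto intro: sum_nonneg)

lemma Wt_VAI_eq:
  assumes "Q \<subseteq> VA"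
  shows "Wt r par w Q = (if Q = {} then 0 else D) + W_below Q"
proof (cases "Q = {}")
  case True
  then show ?thesis by (simp add: Wt_def W_below_def)
next
  case False
  define U where "U = (\<Union>q\<in>Q. ancestors par q)"
  obtain q where "q \<in> Q" using False by auto
  then have "a \<in> ancestors par q" using assms VAI_descendant by blast
  then have "ancestors par a \<subseteq> ancestors par q" by (rule ancestors_trans)
  then have "ancestors par a \<subseteq> U" using \<open>q \<in> Q\<close> unfolding U_def by blast
  moreover have "r \<in> ancestors par a" using reaches_root a_in unfolding ancestors_def by auto
  moreover have "U \<subseteq> V"
    using assms VAI_subset ancestors_subset[OF par_closed] unfolding U_def by blast
  then have "finite U" using finite_V by (rule finite_subset)
  ultimately have "U - {r} = (ancestors par a - {r}) \<union> (U - ancestors par a)"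
    and "finite (ancestors par a - {r})" "finite (U - ancestors par a)"
    by (auto intro: finite_subset)
  then have "(\<Sum>u\<in>U - {r}. w u) = (\<Sum>u\<in>ancestors par a - {r}. w u) + (\<Sum>u\<in>U - ancestors par a. w u)"
    by (simp add: sum.union_disjoint Diff_Int_distrib2)
  then show ?thesis using False by (simp add: Wt_def W_below_def depth_def U_def)
qed

lemma W_below_Un_Int_le:
  assumes "Q \<subseteq> V" "R \<subseteq> V"
  shows "W_below (Q \<union> R) + W_below (Q \<inter> R) \<le> W_below Q + W_below R"
proof -
  define X where "X = (\<Union>q\<in>Q. ancestors par q) - ancestors par a"
  define Y where "Y = (\<Union>q\<in>R. ancestors par q) - ancestors par a"
  have "X \<subseteq> V" "Y \<subseteq> V"
    using assms ancestors_subset[OF par_closed] unfolding X_def Y_def by blast+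
  then have "finite X" "finite Y" and "\<forall>u\<in>X \<inter> Y. 0 \<le> w u"
    using finite_V finite_subset w_nonneg by auto
  moreover have "(\<Union>q\<in>Q \<inter> R. ancestors par q) - ancestors par a \<subseteq> X \<inter> Y"
    unfolding X_def Y_def by blast
  ultimately have "sum w (X \<union> Y) + sum w ((\<Union>q\<in>Q \<inter> R. ancestors par q) - ancestors par a)
      \<le> sum w X + sum w Y"
    by (intro sum_Un_Int_le)
  moreover have "(\<Union>q\<in>Q \<union> R. ancestors par q) - ancestors par a = X \<union> Y"
    unfolding X_def Y_def by blast
  ultimately show ?thesis by (simp add: W_below_def X_def Y_def)
qed

lemma profit_eq:
  assumes "S \<subseteq> VA"
  shows "profit S x = (\<Sum>s\<in>S. p s * \<pi> s) - expect_omega V \<pi> (\<lambda>om. W_below (S \<inter> om)) - (D - x) * Pr \<pi> S"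
proof -
  have "S \<subseteq> V" using assms VAI_subset by blast
  have "(\<Sum>om\<in>Pow V. prob_omega V \<pi> om * Wt r par w (S \<inter> om))
      = expect_omega V \<pi> (\<lambda>om. D * (1 - (if om \<inter> S = {} then 1 else 0)) + W_below (S \<inter> om))"
    unfolding expect_omega_def
  proof (intro sum.cong refl)
    fix om
    have "S \<inter> om \<subseteq> VA" using assms by auto
    then show "prob_omega V \<pi> om * Wt r par w (S \<inter> om)
        = prob_omega V \<pi> om * (D * (1 - (if om \<inter> S = {} then 1 else 0)) + W_below (S \<inter> om))"
      by (simp add: Wt_VAI_eq Int_commute)
  qed
  also have "\<dots> = D * expect_omega V \<pi> (\<lambda>om. 1) - D * expect_omega V \<pi> (\<lambda>om. if om \<inter> S = {} then 1 else 0)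
      + expect_omega V \<pi> (\<lambda>om. W_below (S \<inter> om))"
    unfolding expect_omega_def by (simp add: algebra_simps sum.distrib sum_subtractf sum_distrib_left)
  also have "\<dots> = D * Pr \<pi> S + expect_omega V \<pi> (\<lambda>om. W_below (S \<inter> om))"
    using expect_omega_avoid[OF finite_V \<open>S \<subseteq> V\<close>] expect_omega_one[OF finite_V]
    by (simp add: Pr_def algebra_simps)
  finally show ?thesis unfolding G_def by (simp add: algebra_simps)
qed

lemma supermodular_profit:
  assumes "x \<le> D"
  shows "supermodular_on VA (\<lambda>S. profit S x)"
  unfolding supermodular_on_def
proof (intro allI impI)
  fix S T assume S: "S \<subseteq> VA" and T: "T \<subseteq> VA"
  then have "S \<subseteq> V" "T \<subseteq> V" using VAI_subset by auto
  then have fin: "finite S" "finite T" using finite_V finite_subset by auto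
  have "expect_omega V \<pi> (\<lambda>om. W_below ((S \<union> T) \<inter> om) + W_below ((S \<inter> T) \<inter> om))
      \<le> expect_omega V \<pi> (\<lambda>om. W_below (S \<inter> om) + W_below (T \<inter> om))"
  proof (rule expect_omega_mono[OF pi_nonneg_le_1])
    fix om
    have "(S \<union> T) \<inter> om = (S \<inter> om) \<union> (T \<inter> om)" "(S \<inter> T) \<inter> om = (S \<inter> om) \<inter> (T \<inter> om)" by auto
    then show "W_below ((S \<union> T) \<inter> om) + W_below ((S \<inter> T) \<inter> om) \<le> W_below (S \<inter> om) + W_below (T \<inter> om)"
      using W_below_Un_Int_le[of "S \<inter> om" "T \<inter> om"] \<open>S \<subseteq> V\<close> \<open>T \<subseteq> V\<close> by auto
  qed
  moreover have "(D - x) * (Pr \<pi> (S \<union> T) + Pr \<pi> (S \<inter> T)) \<le> (D - x) * (Pr \<pi> S + Pr \<pi> T)"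
    using Pr_Un_Int_le[OF fin] pi_nonneg_le_1 \<open>S \<subseteq> V\<close> \<open>T \<subseteq> V\<close> assms by (intro mult_left_mono) auto
  moreover have "(\<Sum>s\<in>S \<union> T. p s * \<pi> s) + (\<Sum>s\<in>S \<inter> T. p s * \<pi> s)
      = (\<Sum>s\<in>S. p s * \<pi> s) + (\<Sum>s\<in>T. p s * \<pi> s)"
    by (rule sum.union_inter[OF fin])
  moreover have "S \<union> T \<subseteq> VA" "S \<inter> T \<subseteq> VA" using S T by auto
  ultimately show "profit S x + profit T x \<le> profit (S \<union> T) x + profit (S \<inter> T) x"
    using S T by (simp add: profit_eq expect_omega_add ring_distribs)
qed

lemma optimal_set_iff_is_arg_max:
  "optimal_set V r par w \<pi> p a I S x \<longleftrightarrow> is_arg_max (\<lambda>S. profit S x) (\<lambda>S. S \<subseteq> VA) S"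
proof -
  have "fAI V r par w \<pi> p a I x \<in> (\<lambda>S. profit S x) ` Pow VA"
    unfolding fAI_def using finite_VAI by (intro Max_in) auto
  then obtain S0 where "S0 \<subseteq> VA" "profit S0 x = fAI V r par w \<pi> p a I x" by auto
  moreover have "profit T x \<le> fAI V r par w \<pi> p a I x" if "T \<subseteq> VA" for T
    unfolding fAI_def using finite_VAI that by (intro Max_ge) auto
  ultimately show ?thesis
    unfolding optimal_set_def is_arg_max_linorder by (metis order.antisym)
qed

abbreviation greatest_optimal_set :: "real \<Rightarrow> 'v set" where
  "greatest_optimal_set x \<equiv> greatest_arg_max VA (\<lambda>S. profit S x)"

lemma matryoshka_eq: "matryoshka V r par w \<pi> p a I = greatest_optimal_set ` {0..D}"
proof -
  have "S \<in> matryoshka V r par w \<pi> p a I \<longleftrightarrow>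
      (\<exists>x\<in>{0..D}. is_arg_max (\<lambda>S. profit S x) (\<lambda>S. S \<subseteq> VA) S \<and>
        (\<forall>S'. S \<subset> S' \<and> S' \<subseteq> VA \<longrightarrow> \<not> is_arg_max (\<lambda>S. profit S x) (\<lambda>S. S \<subseteq> VA) S'))" for S
    unfolding matryoshka_def optimal_set_iff_is_arg_max by (auto simp: is_arg_max_def)
  also have "\<dots> S \<longleftrightarrow> (\<exists>x\<in>{0..D}. S = greatest_optimal_set x)" for S
    using maximal_arg_max_iff_greatest[OF finite_VAI supermodular_profit] by auto
  finally show ?thesis by blast
qed

lemma greatest_optimal_set_mono: "mono_on {0..D} greatest_optimal_set"
proof (rule mono_onI)
  fix x y assume "x \<in> {0..D}" "y \<in> {0..D}" "x \<le> y"
  moreover have "Pr \<pi> S \<le> Pr \<pi> T" if "S \<subseteq> T" "T \<subseteq> VA" for S T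
    using Pr_mono[of T S \<pi>] that finite_subset[OF that(2) finite_VAI] VAI_subset pi_nonneg_le_1 by blast
  ultimately show "greatest_optimal_set x \<subseteq> greatest_optimal_set y"
    by (intro greatest_arg_max_mono finite_VAI supermodular_profit)
      (auto simp: G_affine[of V r par w \<pi> p _ y x] mult_left_mono)
qed

lemma greatest_optimal_sets_chain:
  "S \<in> greatest_optimal_set ` {0..D} \<Longrightarrow> T \<in> greatest_optimal_set ` {0..D} \<Longrightarrow> S \<subseteq> T \<or> T \<subseteq> S"
  by (rule mono_on_image_chain[OF greatest_optimal_set_mono])

lemma greatest_optimal_set_subset: "greatest_optimal_set x \<subseteq> VA"
  by (rule greatest_arg_max_subset)

lemma greatest_optimal_sets_card:
  "finite (greatest_optimal_set ` {0..D})" "card (greatest_optimal_set ` {0..D}) \<le> card VA + 1"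
proof -
  have "S \<subseteq> VA" if "S \<in> greatest_optimal_set ` {0..D}" for S
    using that greatest_optimal_set_subset by blast
  from chain_of_subsets_card_le[OF finite_VAI this greatest_optimal_sets_chain]
  show "finite (greatest_optimal_set ` {0..D})" "card (greatest_optimal_set ` {0..D}) \<le> card VA + 1"
    by simp_all
qed

lemma affine_le_fAI:
  assumes "S \<subseteq> VA"
  shows "profit S 0 + Pr \<pi> S * x \<le> fAI V r par w \<pi> p a I x"
proof -
  have "profit S x \<le> fAI V r par w \<pi> p a I x"
    unfolding fAI_def using finite_VAI assms by (intro Max_ge) auto
  then show ?thesis using G_affine[of V r par w \<pi> p S x 0] by (simp add: mult.commute)
qed

lemma fAI_eq_affine_greatest_optimal_set:
  assumes "x \<le> D"
  shows "fAI V r par w \<pi> p a I x = profit (greatest_optimal_set x) 0 + Pr \<pi> (greatest_optimal_set x) * x"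
proof -
  have "optimal_set V r par w \<pi> p a I (greatest_optimal_set x) x"
    using is_arg_max_greatest_arg_max[OF finite_VAI supermodular_profit[OF assms]]
    by (simp add: optimal_set_iff_is_arg_max)
  then show ?thesis
    unfolding optimal_set_def using G_affine[of V r par w \<pi> p _ x 0] by (simp add: mult.commute)
qed

lemma fAI_piecewise_affine:
  "(finite {x \<in> {0<..<D}. \<not> fAI V r par w \<pi> p a I differentiable (at x)}
     \<and> card {x \<in> {0<..<D}. \<not> fAI V r par w \<pi> p a I differentiable (at x)} \<le> card VA)
   \<and> (\<exists>k t. k \<le> card VA + 1 \<and> t 0 = 0 \<and> t k = D \<and> (\<forall>i<k. t i < t (Suc i)) \<and>
       (\<forall>i<k. \<exists>\<alpha> \<beta>. \<forall>x\<in>{t i..t (Suc i)}. fAI V r par w \<pi> p a I x = \<alpha> + \<beta> * x))"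
proof (rule upper_envelope_of_monotone_selection[OF depth_nonneg greatest_optimal_set_mono
      greatest_optimal_sets_card])
  show "fAI V r par w \<pi> p a I x
      = profit (greatest_optimal_set x) 0 + Pr \<pi> (greatest_optimal_set x) * x" if "x \<in> {0..D}" for x
    using that by (simp add: fAI_eq_affine_greatest_optimal_set)
  show "profit S 0 + Pr \<pi> S * x \<le> fAI V r par w \<pi> p a I x"
    if "x \<in> {0..D}" "S \<in> greatest_optimal_set ` {0..D}" for x S
    using that greatest_optimal_set_subset affine_le_fAI by blast
qed

end

theorem proposition5:
  fixes V :: "'v set" and r :: 'v and par :: "'v \<Rightarrow> 'v"
    and w \<pi> p :: "'v \<Rightarrow> real" and a :: 'v and I :: "'v set"
  assumes tree: "is_rooted_tree V r par"
    and w_nonneg: "\<forall>v\<in>V. w v \<ge> 0"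
    and pi_range: "\<forall>v\<in>V. 0 < \<pi> v \<and> \<pi> v \<le> 1"
    and a_in: "a \<in> V"
    and I_sub: "I \<subseteq> insert a (children V r par a)"
  defines "f \<equiv> fAI V r par w \<pi> p a I"
    and "n \<equiv> card (VAI V par a I)"
    and "D \<equiv> depth r par w a"
  shows "(finite {x \<in> {0<..<D}. \<not> f differentiable (at x)}
         \<and> card {x \<in> {0<..<D}. \<not> f differentiable (at x)} \<le> n)
     \<and> (\<exists>k t. k \<le> n + 1 \<and> t 0 = 0 \<and> t k = D \<and> (\<forall>i<k. t i < t (Suc i)) \<and>
           (\<forall>i<k. \<exists>\<alpha> \<beta>. \<forall>x\<in>{t i..t (Suc i)}. f x = \<alpha> + \<beta> * x))
     \<and> (\<forall>S\<in>matryoshka V r par w \<pi> p a I. \<forall>S'\<in>matryoshka V r par w \<pi> p a I. S \<subseteq> S' \<or> S' \<subseteq> S)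
     \<and> finite (matryoshka V r par w \<pi> p a I) \<and> card (matryoshka V r par w \<pi> p a I) \<le> n + 1"
proof -
  interpret subtree_problem V r par w \<pi> p a I using assms by unfold_locales
  show ?thesis
    unfolding f_def n_def D_def matryoshka_eq
    using fAI_piecewise_affine greatest_optimal_sets_chain greatest_optimal_sets_card by blast
qed

end
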